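(* For all integers $n,m\ge 3$, $\gamma_p(C_n\times C_m)\le 4\left\lceil\frac{n}{4}\right\rceil\left\lceil\frac{m}{4}\right\rceil$.
   Context: All graphs are finite, simple and undirected. $C_n$ denotes the cycle of order $n$ and $G\times H$ the Cartesian product of graphs. For a graph $G$ without isolated vertices, a set $D\subseteq V(G)$ is a paired dominating set if every vertex outside $D$ has a neighbour in $D$ and the induced subgraph $G[D]$ has a perfect matching; $\gamma_p(G)$ is the minimum size of a paired dominating set. *)

theory Defs
  imports Complex_Main
begin

text \<open>A finite simple graph is given by a vertex set V and a symmetric irreflexive
adjacency relation E (only its restriction to V matters).\<close>

definition dominating :: "'a set \<Rightarrow> ('a \<Rightarrow> 'a \<Rightarrow> bool) \<Rightarrow> 'a set \<Rightarrow> bool" where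
  "dominating V E D \<longleftrightarrow> D \<subseteq> V \<and> (\<forall>v\<in>V - D. \<exists>u\<in>D. E v u)"

definition perfect_matching_on :: "('a \<Rightarrow> 'a \<Rightarrow> bool) \<Rightarrow> 'a set \<Rightarrow> 'a set set \<Rightarrow> bool" where
  "perfect_matching_on E D M \<longleftrightarrow>
     (\<forall>e\<in>M. \<exists>u v. e = {u, v} \<and> u \<in> D \<and> v \<in> D \<and> u \<noteq> v \<and> E u v) \<and>
     (\<forall>e\<in>M. \<forall>e'\<in>M. e \<noteq> e' \<longrightarrow> e \<inter> e' = {}) \<and>
     \<Union>M = D"

definition paired_dominating :: "'a set \<Rightarrow> ('a \<Rightarrow> 'a \<Rightarrow> bool) \<Rightarrow> 'a set \<Rightarrow> bool" where
  "paired_dominating V E D \<longleftrightarrow> dominating V E D \<and> (\<exists>M. perfect_matching_on E D M)"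

definition paired_domination_number :: "'a set \<Rightarrow> ('a \<Rightarrow> 'a \<Rightarrow> bool) \<Rightarrow> nat" where
  "paired_domination_number V E = (LEAST k. \<exists>D. paired_dominating V E D \<and> card D = k)"

definition cycle_adj :: "nat \<Rightarrow> nat \<Rightarrow> nat \<Rightarrow> bool" where
  "cycle_adj n i j \<longleftrightarrow> i < n \<and> j < n \<and> i \<noteq> j \<and> ((i + 1) mod n = j \<or> (j + 1) mod n = i)"

definition cart_prod_adj :: "('a \<Rightarrow> 'a \<Rightarrow> bool) \<Rightarrow> ('b \<Rightarrow> 'b \<Rightarrow> bool) \<Rightarrow> 'a \<times> 'b \<Rightarrow> 'a \<times> 'b \<Rightarrow> bool" where
  "cart_prod_adj E1 E2 x y \<longleftrightarrow>
     (fst x = fst y \<and> E2 (snd x) (snd y)) \<or> (snd x = snd y \<and> E1 (fst x) (fst y))"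

definition torus_vertices :: "nat \<Rightarrow> nat \<Rightarrow> (nat \<times> nat) set" where
  "torus_vertices n m = {0..<n} \<times> {0..<m}"

definition torus_adj :: "nat \<Rightarrow> nat \<Rightarrow> nat \<times> nat \<Rightarrow> nat \<times> nat \<Rightarrow> bool" where
  "torus_adj n m = cart_prod_adj (cycle_adj n) (cycle_adj m)"

end

theory Submission
  imports Defs
begin

text \<open>Let P be the vertex set of the \<lceil>m/4\<rceil> disjoint edges {4q, 4q + 1} of C_m and Q its rotation
  by 2. Both are paired dominating sets of C_m, and P \<union> Q covers C_m. In C_n \<times> C_m put a copy of P
  on the rows i = 0 (mod 4) and a copy of Q on the rows i = 2 (mod 4). A vertex in one of these
  rows is dominated inside its row, and every other row has a neighbouring row of each kind, so
  its vertices are dominated vertically by whichever of P, Q contains their column. The row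
  copies of the matchings of P and Q form a perfect matching, and there are at most
  2\<lceil>n/4\<rceil> \<sqdot> 2\<lceil>m/4\<rceil> vertices.\<close>

lemma paired_domination_number_le:
  assumes "paired_dominating V E D"
  shows "paired_domination_number V E \<le> card D"
  unfolding paired_domination_number_def using assms by (intro Least_le) blast

lemma
  assumes "perfect_matching_on E D M"
  shows perfect_matching_on_edge: "e \<in> M \<Longrightarrow> \<exists>u v. e = {u, v} \<and> u \<in> D \<and> v \<in> D \<and> u \<noteq> v \<and> E u v"
    and perfect_matching_on_disjoint: "e \<in> M \<Longrightarrow> e' \<in> M \<Longrightarrow> e \<noteq> e' \<Longrightarrow> e \<inter> e' = {}"
    and perfect_matching_on_Union: "\<Union>M = D"
  using assms unfolding perfect_matching_on_def by auto

lemma perfect_matching_onI: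
  assumes "\<And>e. e \<in> M \<Longrightarrow> \<exists>u v. e = {u, v} \<and> u \<in> D \<and> v \<in> D \<and> u \<noteq> v \<and> E u v"
    and "\<And>e e'. e \<in> M \<Longrightarrow> e' \<in> M \<Longrightarrow> e \<noteq> e' \<Longrightarrow> e \<inter> e' = {}"
    and "\<Union>M = D"
  shows "perfect_matching_on E D M"
  using assms unfolding perfect_matching_on_def by blast

lemma dominating_image:
  assumes D: "dominating V E D" and f: "bij_betw f V V"
    and hom: "\<And>u v. u \<in> V \<Longrightarrow> v \<in> V \<Longrightarrow> E u v \<Longrightarrow> E (f u) (f v)"
  shows "dominating V E (f ` D)"
proof -
  have DV: "D \<subseteq> V" and dom: "\<And>v. v \<in> V - D \<Longrightarrow> \<exists>u\<in>D. E v u"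
    using D unfolding dominating_def by blast+
  have fV: "f ` V = V" using f by (simp add: bij_betw_def)
  have "\<exists>u\<in>f ` D. E w u" if w: "w \<in> V - f ` D" for w
  proof -
    have "w \<in> f ` V" using w fV by simp
    then obtain v where v: "v \<in> V" "w = f v" by blast
    with w have "v \<in> V - D" by blast
    then obtain u where "u \<in> D" "E v u" using dom by blast
    thus ?thesis using hom[of v u] v DV by blast
  qed
  moreover have "f ` D \<subseteq> V" using image_mono[OF DV, of f] fV by simp
  ultimately show ?thesis unfolding dominating_def by blast
qed

lemma perfect_matching_on_image:
  assumes M: "perfect_matching_on E D M" and inj: "inj_on f D"
    and hom: "\<And>u v. u \<in> D \<Longrightarrow> v \<in> D \<Longrightarrow> E u v \<Longrightarrow> E (f u) (f v)"
  shows "perfect_matching_on E (f ` D) ((`) f ` M)"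
proof -
  note MD = perfect_matching_on_Union[OF M]
  have "\<exists>x y. e' = {x, y} \<and> x \<in> f ` D \<and> y \<in> f ` D \<and> x \<noteq> y \<and> E x y" if e': "e' \<in> (`) f ` M" for e'
  proof -
    obtain e where e: "e \<in> M" "e' = f ` e" using e' by blast
    then obtain u v where uv: "e = {u, v}" "u \<in> D" "v \<in> D" "u \<noteq> v" "E u v"
      using perfect_matching_on_edge[OF M] by blast
    have "f u \<noteq> f v" using inj uv(2-4) by (simp add: inj_on_eq_iff)
    moreover have "E (f u) (f v)" using hom uv(2,3,5) by blast
    moreover have "e' = {f u, f v}" using e(2) uv(1) by simp
    ultimately show ?thesis using uv(2,3) by blast
  qed
  moreover have "e' \<inter> d' = {}" if ed: "e' \<in> (`) f ` M" "d' \<in> (`) f ` M" "e' \<noteq> d'" for e' d'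
  proof -
    obtain e d where ed_M: "e \<in> M" "d \<in> M" "e' = f ` e" "d' = f ` d" "e \<noteq> d" using ed by blast
    hence "e \<inter> d = {}" "e \<subseteq> D" "d \<subseteq> D" using perfect_matching_on_disjoint[OF M] MD by blast+
    hence "f ` e \<inter> f ` d = {}" using inj_on_image_Int[OF inj, of e d] by simp
    thus ?thesis using ed_M(3,4) by simp
  qed
  moreover have "\<Union>((`) f ` M) = f ` D" using MD by (simp add: image_Union[symmetric])
  ultimately show ?thesis by (rule perfect_matching_onI)
qed

lemma paired_dominating_image:
  assumes D: "paired_dominating V E D" and f: "bij_betw f V V"
    and hom: "\<And>u v. u \<in> V \<Longrightarrow> v \<in> V \<Longrightarrow> E u v \<Longrightarrow> E (f u) (f v)"
  shows "paired_dominating V E (f ` D)"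
proof -
  obtain M where M: "perfect_matching_on E D M" and D': "dominating V E D"
    using D unfolding paired_dominating_def by blast
  have DV: "D \<subseteq> V" using D' unfolding dominating_def by blast
  have "inj_on f D" using f DV by (auto simp: bij_betw_def intro: inj_on_subset)
  hence "perfect_matching_on E (f ` D) ((`) f ` M)"
    using M hom DV by (intro perfect_matching_on_image) blast+
  moreover have "dominating V E (f ` D)" using D' f hom by (rule dominating_image)
  ultimately show ?thesis unfolding paired_dominating_def by blast
qed

lemma perfect_matching_on_Un:
  assumes A: "perfect_matching_on E A M" and B: "perfect_matching_on E B N" and AB: "A \<inter> B = {}"
  shows "perfect_matching_on E (A \<union> B) (M \<union> N)"
proof -
  note MA = perfect_matching_on_Union[OF A] and NB = perfect_matching_on_Union[OF B]
  have "\<exists>u v. e = {u, v} \<and> u \<in> A \<union> B \<and> v \<in> A \<union> B \<and> u \<noteq> v \<and> E u v" if "e \<in> M \<union> N" for e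
    using that perfect_matching_on_edge[OF A] perfect_matching_on_edge[OF B] by (metis UnE UnI1 UnI2)
  moreover have "e \<inter> e' = {}" if "e \<in> M \<union> N" "e' \<in> M \<union> N" "e \<noteq> e'" for e e'
  proof -
    have "e \<subseteq> A \<and> e' \<subseteq> B \<or> e \<subseteq> B \<and> e' \<subseteq> A \<or> e \<in> M \<and> e' \<in> M \<or> e \<in> N \<and> e' \<in> N"
      using that(1,2) MA NB by blast
    thus ?thesis using AB perfect_matching_on_disjoint[OF A] perfect_matching_on_disjoint[OF B] that(3) by blast
  qed
  moreover have "\<Union>(M \<union> N) = A \<union> B" using MA NB by simp
  ultimately show ?thesis by (rule perfect_matching_onI)
qed

definition lift_matching :: "'a set \<Rightarrow> 'b set set \<Rightarrow> ('a \<times> 'b) set set" where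
  "lift_matching R M = (\<lambda>(i, d). Pair i ` d) ` (R \<times> M)"

lemma perfect_matching_on_lift:
  assumes M: "perfect_matching_on E2 P M"
  shows "perfect_matching_on (cart_prod_adj E1 E2) (R \<times> P) (lift_matching R M)"
proof -
  have "\<exists>x y. e = {x, y} \<and> x \<in> R \<times> P \<and> y \<in> R \<times> P \<and> x \<noteq> y \<and> cart_prod_adj E1 E2 x y"
    if e: "e \<in> lift_matching R M" for e
  proof -
    obtain i d where id: "i \<in> R" "d \<in> M" "e = Pair i ` d" using e unfolding lift_matching_def by blast
    moreover obtain u v where "d = {u, v}" "u \<in> P" "v \<in> P" "u \<noteq> v" "E2 u v"
      using perfect_matching_on_edge[OF M id(2)] by blast
    ultimately show ?thesis unfolding cart_prod_adj_def by (intro exI[of _ "(i, u)"] exI[of _ "(i, v)"]) auto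
  qed
  moreover have "e \<inter> e' = {}" if ee': "e \<in> lift_matching R M" "e' \<in> lift_matching R M" "e \<noteq> e'" for e e'
  proof -
    obtain i d where "d \<in> M" "e = Pair i ` d" using ee'(1) unfolding lift_matching_def by auto
    moreover obtain i' d' where "d' \<in> M" "e' = Pair i' ` d'" using ee'(2) unfolding lift_matching_def by auto
    ultimately show ?thesis using perfect_matching_on_disjoint[OF M] ee'(3) by blast
  qed
  moreover have "\<Union>(lift_matching R M) = R \<times> P"
    unfolding lift_matching_def perfect_matching_on_Union[OF M, symmetric] by auto
  ultimately show ?thesis by (rule perfect_matching_onI)
qed

lemma dominating_cart_prod:
  assumes P: "dominating V2 E2 P" and Q: "dominating V2 E2 Q" and PQ: "P \<union> Q = V2"
    and R: "R1 \<subseteq> V1" "R2 \<subseteq> V1"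
    and rows: "\<And>i. i \<in> V1 - (R1 \<union> R2) \<Longrightarrow> (\<exists>r\<in>R1. E1 i r) \<and> (\<exists>r\<in>R2. E1 i r)"
  shows "dominating (V1 \<times> V2) (cart_prod_adj E1 E2) (R1 \<times> P \<union> R2 \<times> Q)"
  unfolding dominating_def
proof (intro conjI ballI)
  show "R1 \<times> P \<union> R2 \<times> Q \<subseteq> V1 \<times> V2"
    using P Q R unfolding dominating_def by blast
next
  fix v assume v: "v \<in> V1 \<times> V2 - (R1 \<times> P \<union> R2 \<times> Q)"
  obtain i j where ij: "v = (i, j)" "i \<in> V1" "j \<in> V2" using v by blast
  consider "i \<in> R1" | "i \<in> R2" | "i \<in> V1 - (R1 \<union> R2)" using ij by blast
  thus "\<exists>u\<in>R1 \<times> P \<union> R2 \<times> Q. cart_prod_adj E1 E2 v u"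
  proof cases
    case 1
    hence "j \<in> V2 - P" using v ij by blast
    then obtain p where "p \<in> P" "E2 j p" using P unfolding dominating_def by blast
    hence "(i, p) \<in> R1 \<times> P" "cart_prod_adj E1 E2 v (i, p)" using 1 ij unfolding cart_prod_adj_def by auto
    thus ?thesis by blast
  next
    case 2
    hence "j \<in> V2 - Q" using v ij by blast
    then obtain p where "p \<in> Q" "E2 j p" using Q unfolding dominating_def by blast
    hence "(i, p) \<in> R2 \<times> Q" "cart_prod_adj E1 E2 v (i, p)" using 2 ij unfolding cart_prod_adj_def by auto
    thus ?thesis by blast
  next
    case 3
    then obtain r1 r2 where r: "r1 \<in> R1" "E1 i r1" "r2 \<in> R2" "E1 i r2" using rows by blast
    hence "cart_prod_adj E1 E2 v (r1, j)" "cart_prod_adj E1 E2 v (r2, j)"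
      using ij unfolding cart_prod_adj_def by auto
    moreover have "(r1, j) \<in> R1 \<times> P \<or> (r2, j) \<in> R2 \<times> Q" using PQ ij r by blast
    ultimately show ?thesis by blast
  qed
qed

lemma paired_dominating_cart_prod:
  assumes P: "paired_dominating V2 E2 P" and Q: "paired_dominating V2 E2 Q" and PQ: "P \<union> Q = V2"
    and R: "R1 \<subseteq> V1" "R2 \<subseteq> V1" "R1 \<inter> R2 = {}"
    and rows: "\<And>i. i \<in> V1 - (R1 \<union> R2) \<Longrightarrow> (\<exists>r\<in>R1. E1 i r) \<and> (\<exists>r\<in>R2. E1 i r)"
  shows "paired_dominating (V1 \<times> V2) (cart_prod_adj E1 E2) (R1 \<times> P \<union> R2 \<times> Q)"
proof -
  obtain MP MQ where "perfect_matching_on E2 P MP" "perfect_matching_on E2 Q MQ"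
    using P Q unfolding paired_dominating_def by blast
  moreover have "(R1 \<times> P) \<inter> (R2 \<times> Q) = {}" using R(3) by blast
  ultimately have "perfect_matching_on (cart_prod_adj E1 E2) (R1 \<times> P \<union> R2 \<times> Q)
      (lift_matching R1 MP \<union> lift_matching R2 MQ)"
    by (intro perfect_matching_on_Un perfect_matching_on_lift)
  moreover have "dominating (V1 \<times> V2) (cart_prod_adj E1 E2) (R1 \<times> P \<union> R2 \<times> Q)"
    using P Q unfolding paired_dominating_def by (intro dominating_cart_prod PQ R(1,2) rows) blast+
  ultimately show ?thesis unfolding paired_dominating_def by blast
qed

lemma cycle_adj_Suc: "i + 1 < n \<Longrightarrow> cycle_adj n i (i + 1)"
  unfolding cycle_adj_def by simp

lemma cycle_adj_pred: "0 < i \<Longrightarrow> i < n \<Longrightarrow> cycle_adj n i (i - 1)"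
  unfolding cycle_adj_def by auto

lemma cycle_adj_last_first: "2 \<le> n \<Longrightarrow> cycle_adj n (n - 1) 0"
  unfolding cycle_adj_def by simp

lemma nat_mod4_cases:
  fixes j :: nat
  obtains (0) k where "j = 4 * k" | (1) k where "j = 4 * k + 1"
    | (2) k where "j = 4 * k + 2" | (3) k where "j = 4 * k + 3"
proof -
  have j: "j = 4 * (j div 4) + j mod 4" by simp
  have "j mod 4 < 4" by simp
  hence "j mod 4 = 0 \<or> j mod 4 = 1 \<or> j mod 4 = 2 \<or> j mod 4 = 3" by linarith
  thus ?thesis using j that by fastforce
qed

lemma inj_on_rotate: "inj_on (\<lambda>j. (j + k) mod n) {0..<n::nat}"
proof -
  have "i = j" if "j < n" "i \<le> j" "(i + k) mod n = (j + k) mod n" for i j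
  proof -
    have "n dvd j - i" using that(2,3) mod_eq_dvd_iff_nat[of "i + k" "j + k" n] by simp
    moreover have "j - i < n" using that(1) by linarith
    ultimately show ?thesis using that(2) nat_dvd_not_less[of "j - i" n] by linarith
  qed
  thus ?thesis unfolding inj_on_def by (metis atLeastLessThan_iff nat_le_linear)
qed

lemma cycle_adj_rotate:
  assumes "cycle_adj n i j"
  shows "cycle_adj n ((i + k) mod n) ((j + k) mod n)"
proof -
  have ij: "i < n" "j < n" "i \<noteq> j" "(i + 1) mod n = j \<or> (j + 1) mod n = i"
    using assms unfolding cycle_adj_def by blast+
  have "(i + k) mod n \<noteq> (j + k) mod n" using inj_on_rotate[of k n] ij(1-3) by (auto dest: inj_onD)
  moreover have "(i + k) mod n < n" "(j + k) mod n < n" using ij(1) by simp_all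
  moreover have step: "((a + k) mod n + 1) mod n = (b + k) mod n" if "(a + 1) mod n = b" for a b
  proof -
    have "((a + k) mod n + 1) mod n = ((a + 1) + k) mod n" by (simp add: mod_Suc_eq ac_simps)
    also have "\<dots> = ((a + 1) mod n + k) mod n" by (rule mod_add_left_eq[symmetric])
    finally show ?thesis using that by simp
  qed
  ultimately show ?thesis using ij(4) unfolding cycle_adj_def by (metis step)
qed

lemma paired_dominating_cycle_rotate:
  assumes "paired_dominating {0..<n} (cycle_adj n) D"
  shows "paired_dominating {0..<n} (cycle_adj n) ((\<lambda>j. (j + k) mod n) ` D)"
proof (rule paired_dominating_image[OF assms])
  have "(\<lambda>j. (j + k) mod n) ` {0..<n} \<subseteq> {0..<n}" by auto
  thus "bij_betw (\<lambda>j. (j + k) mod n) {0..<n} {0..<n}"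
    using inj_on_rotate by (simp add: bij_betw_def endo_inj_surj)
qed (rule cycle_adj_rotate)

text \<open>The edges {4q, 4q + 1} for q < \<lceil>m/4\<rceil>; when m = 1 (mod 4) the last one would leave the
  cycle and is shifted back to {m - 2, m - 1}.\<close>
definition cycle_pairs :: "nat \<Rightarrow> nat set set" where
  "cycle_pairs m = (\<lambda>q. {min (4 * q) (m - 2), min (4 * q) (m - 2) + 1}) ` {..<(m + 3) div 4}"

lemma perfect_matching_on_cycle_pairs:
  assumes "3 \<le> m"
  shows "perfect_matching_on (cycle_adj m) (\<Union>(cycle_pairs m)) (cycle_pairs m)"
proof -
  define s where "s q = min (4 * q) (m - 2)" for q
  have pairs: "cycle_pairs m = (\<lambda>q. {s q, s q + 1}) ` {..<(m + 3) div 4}"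
    unfolding cycle_pairs_def s_def ..
  have sep: "s q + 1 < s q'" if "q < q'" "q' < (m + 3) div 4" for q q'
  proof -
    have "4 * q + 1 < 4 * q'" "4 * q + 1 < m - 2" using that by linarith+
    moreover have "s q \<le> 4 * q" unfolding s_def by simp
    ultimately show ?thesis unfolding s_def by simp
  qed
  have adj: "cycle_adj m (s q) (s q + 1)" for q
  proof (rule cycle_adj_Suc)
    have "s q \<le> m - 2" unfolding s_def by simp
    thus "s q + 1 < m" using assms by linarith
  qed
  have "\<exists>u v. e = {u, v} \<and> u \<in> \<Union>(cycle_pairs m) \<and> v \<in> \<Union>(cycle_pairs m) \<and> u \<noteq> v \<and> cycle_adj m u v"
    if e: "e \<in> cycle_pairs m" for e
  proof -
    obtain q where "e = {s q, s q + 1}" using e unfolding pairs by blast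
    moreover have "s q \<in> e" "s q + 1 \<in> e" using calculation by simp_all
    ultimately have "e = {s q, s q + 1} \<and> s q \<in> \<Union>(cycle_pairs m) \<and> s q + 1 \<in> \<Union>(cycle_pairs m)
        \<and> s q \<noteq> s q + 1 \<and> cycle_adj m (s q) (s q + 1)"
      using e adj[of q] by auto
    thus ?thesis by blast
  qed
  moreover have "e \<inter> e' = {}" if ee': "e \<in> cycle_pairs m" "e' \<in> cycle_pairs m" "e \<noteq> e'" for e e'
  proof -
    obtain q q' where q: "q < (m + 3) div 4" "q' < (m + 3) div 4" "e = {s q, s q + 1}" "e' = {s q', s q' + 1}"
      using ee'(1,2) unfolding pairs by blast
    hence "q \<noteq> q'" using ee'(3) by blast
    hence "s q + 1 < s q' \<or> s q' + 1 < s q" using sep q(1,2) by (meson linorder_neqE_nat)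
    thus ?thesis using q(3,4) by auto
  qed
  ultimately show ?thesis by (rule perfect_matching_onI[OF _ _ refl])
qed

lemma mem_Union_cycle_pairs:
  assumes "j < m" "j mod 4 < 2"
  shows "j \<in> \<Union>(cycle_pairs m)"
proof -
  have "j div 4 < (m + 3) div 4" using assms by linarith
  moreover have "j = min (4 * (j div 4)) (m - 2) \<or> j = min (4 * (j div 4)) (m - 2) + 1"
    using assms div_mult_mod_eq[of j 4] unfolding min_def by arith
  ultimately show ?thesis unfolding cycle_pairs_def by blast
qed

lemma Union_cycle_pairs_subset: "3 \<le> m \<Longrightarrow> \<Union>(cycle_pairs m) \<subseteq> {0..<m}"
  unfolding cycle_pairs_def by auto

lemma card_Union_cycle_pairs: "card (\<Union>(cycle_pairs m)) \<le> 2 * ((m + 3) div 4)"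
proof -
  have "card (\<Union>(cycle_pairs m)) \<le> (\<Sum>q<(m + 3) div 4. card {min (4 * q) (m - 2), min (4 * q) (m - 2) + 1})"
    unfolding cycle_pairs_def by (rule card_UN_le) (rule finite_lessThan)
  also have "\<dots> \<le> (\<Sum>q<(m + 3) div 4. 2)"
    by (rule sum_mono) (simp add: card_insert_if)
  finally show ?thesis by simp
qed

lemma paired_dominating_cycle_pairs:
  assumes "3 \<le> m"
  shows "paired_dominating {0..<m} (cycle_adj m) (\<Union>(cycle_pairs m))"
proof -
  let ?P = "\<Union>(cycle_pairs m)"
  have "\<exists>u\<in>?P. cycle_adj m j u" if j: "j < m" "j \<notin> ?P" for j
  proof (cases j rule: nat_mod4_cases)
    case (2 k)
    hence "j - 1 \<in> ?P" using j(1) by (intro mem_Union_cycle_pairs) simp_all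
    moreover have "cycle_adj m j (j - 1)" using 2 j(1) by (intro cycle_adj_pred) simp_all
    ultimately show ?thesis by blast
  next
    case (3 k)
    show ?thesis
    proof (cases "j + 1 < m")
      case True
      hence "j + 1 \<in> ?P" using 3 by (intro mem_Union_cycle_pairs) simp_all
      moreover have "cycle_adj m j (j + 1)" using True by (rule cycle_adj_Suc)
      ultimately show ?thesis by blast
    next
      case False
      hence "j = m - 1" using j(1) by linarith
      hence "cycle_adj m j 0" using assms cycle_adj_last_first[of m] by simp
      moreover have "0 \<in> ?P" using assms by (intro mem_Union_cycle_pairs) simp_all
      ultimately show ?thesis by blast
    qed
  qed (use j mem_Union_cycle_pairs[of j m] in simp_all)
  moreover have "?P \<subseteq> {0..<m}" using assms by (rule Union_cycle_pairs_subset)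
  ultimately have "dominating {0..<m} (cycle_adj m) ?P" unfolding dominating_def by auto
  thus ?thesis using perfect_matching_on_cycle_pairs[OF assms] unfolding paired_dominating_def by blast
qed

lemma Union_cycle_pairs_rotate:
  assumes "3 \<le> m"
  shows "\<Union>(cycle_pairs m) \<union> (\<lambda>j. (j + 2) mod m) ` \<Union>(cycle_pairs m) = {0..<m}"
proof -
  have rot: "j \<in> (\<lambda>j. (j + 2) mod m) ` \<Union>(cycle_pairs m)" if j: "j < m" "j \<notin> \<Union>(cycle_pairs m)" for j
  proof -
    have "2 \<le> j" "(j - 2) mod 4 < 2"
      by (cases j rule: nat_mod4_cases; use j mem_Union_cycle_pairs[of j m] in simp)+
    hence "j - 2 \<in> \<Union>(cycle_pairs m)" "j = (j - 2 + 2) mod m"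
      using j(1) mem_Union_cycle_pairs[of "j - 2" m] by simp_all
    thus ?thesis by blast
  qed
  have "(j + 2) mod m < m" for j using assms by simp
  hence "(\<lambda>j. (j + 2) mod m) ` \<Union>(cycle_pairs m) \<subseteq> {0..<m}" by auto
  moreover have "{0..<m} \<subseteq> \<Union>(cycle_pairs m) \<union> (\<lambda>j. (j + 2) mod m) ` \<Union>(cycle_pairs m)"
    using rot by fastforce
  ultimately show ?thesis using Union_cycle_pairs_subset[OF assms] by (intro equalityI Un_least)
qed

lemma cycle_two_pair_covers:
  assumes "3 \<le> m"
  obtains P Q where "paired_dominating {0..<m} (cycle_adj m) P" "paired_dominating {0..<m} (cycle_adj m) Q"
    "P \<union> Q = {0..<m}" "card P \<le> 2 * ((m + 3) div 4)" "card Q \<le> 2 * ((m + 3) div 4)"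
proof
  let ?P = "\<Union>(cycle_pairs m)"
  show P: "paired_dominating {0..<m} (cycle_adj m) ?P" using assms by (rule paired_dominating_cycle_pairs)
  thus "paired_dominating {0..<m} (cycle_adj m) ((\<lambda>j. (j + 2) mod m) ` ?P)"
    by (rule paired_dominating_cycle_rotate)
  show "?P \<union> (\<lambda>j. (j + 2) mod m) ` ?P = {0..<m}" using assms by (rule Union_cycle_pairs_rotate)
  show card_P: "card ?P \<le> 2 * ((m + 3) div 4)" by (rule card_Union_cycle_pairs)
  have "finite ?P" using Union_cycle_pairs_subset[OF assms] finite_subset by blast
  hence "card ((\<lambda>j. (j + 2) mod m) ` ?P) \<le> card ?P" by (rule card_image_le)
  thus "card ((\<lambda>j. (j + 2) mod m) ` ?P) \<le> 2 * ((m + 3) div 4)" using card_P by linarith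
qed

definition cycle_residue0 :: "nat \<Rightarrow> nat set" where
  "cycle_residue0 n = {i. i < n \<and> i mod 4 = 0}"

text \<open>The vertex n - 1 is added when n = 2 (mod 4), since both its neighbours n - 2 and 0
  lie in cycle_residue0.\<close>
definition cycle_residue2 :: "nat \<Rightarrow> nat set" where
  "cycle_residue2 n = {i. i < n \<and> (i mod 4 = 2 \<or> (i = n - 1 \<and> i mod 4 = 1))}"

lemma card_cycle_residue0: "card (cycle_residue0 n) \<le> (n + 3) div 4"
proof -
  have "cycle_residue0 n \<subseteq> (\<lambda>p. 4 * p) ` {..<(n + 3) div 4}"
  proof
    fix i assume "i \<in> cycle_residue0 n"
    hence "i < n" "i mod 4 = 0" unfolding cycle_residue0_def by simp_all
    moreover have "i = 4 * (i div 4) + i mod 4" by simp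
    ultimately have "i = 4 * (i div 4)" "i div 4 < (n + 3) div 4" by linarith+
    thus "i \<in> (\<lambda>p. 4 * p) ` {..<(n + 3) div 4}" by blast
  qed
  thus ?thesis using surj_card_le[OF finite_lessThan] by simp
qed

lemma card_cycle_residue2: "card (cycle_residue2 n) \<le> (n + 3) div 4"
proof -
  have "cycle_residue2 n \<subseteq> (\<lambda>p. min (4 * p + 2) (n - 1)) ` {..<(n + 3) div 4}"
  proof
    fix i assume "i \<in> cycle_residue2 n"
    hence "i < n" "i mod 4 = 2 \<or> (i = n - 1 \<and> i mod 4 = 1)" unfolding cycle_residue2_def by simp_all
    moreover have "i = 4 * (i div 4) + i mod 4" by simp
    ultimately have "i = min (4 * (i div 4) + 2) (n - 1)" "i div 4 < (n + 3) div 4"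
      by (simp only: min_def split: if_split; arith)+
    thus "i \<in> (\<lambda>p. min (4 * p + 2) (n - 1)) ` {..<(n + 3) div 4}" by blast
  qed
  thus ?thesis using surj_card_le[OF finite_lessThan] by simp
qed

lemma cycle_adj_residues:
  assumes "3 \<le> n" and i: "i \<in> {0..<n} - (cycle_residue0 n \<union> cycle_residue2 n)"
  shows "(\<exists>r\<in>cycle_residue0 n. cycle_adj n i r) \<and> (\<exists>r\<in>cycle_residue2 n. cycle_adj n i r)"
proof (cases i rule: nat_mod4_cases)
  case (1 k)
  hence "i + 1 < n" using i unfolding cycle_residue2_def by auto
  moreover have "i - 1 \<in> cycle_residue0 n" "i + 1 \<in> cycle_residue2 n"
    using 1 \<open>i + 1 < n\<close> unfolding cycle_residue0_def cycle_residue2_def by (simp_all add: mod_Suc)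
  moreover have "cycle_adj n i (i - 1)" using 1 i by (intro cycle_adj_pred) auto
  ultimately show ?thesis using cycle_adj_Suc by blast
next
  case (3 k)
  hence "i - 1 \<in> cycle_residue2 n" using i unfolding cycle_residue2_def by (simp add: mod_Suc)
  moreover have "cycle_adj n i (i - 1)" using 3 i by (intro cycle_adj_pred) auto
  moreover have "\<exists>r\<in>cycle_residue0 n. cycle_adj n i r"
  proof (cases "i + 1 < n")
    case True
    hence "i + 1 \<in> cycle_residue0 n" using 3 unfolding cycle_residue0_def by (simp add: mod_Suc)
    moreover have "cycle_adj n i (i + 1)" using True by (rule cycle_adj_Suc)
    ultimately show ?thesis by blast
  next
    case False
    hence "i = n - 1" using i by auto
    hence "cycle_adj n i 0" using assms(1) cycle_adj_last_first[of n] by simp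
    moreover have "0 \<in> cycle_residue0 n" using assms(1) unfolding cycle_residue0_def by simp
    ultimately show ?thesis by blast
  qed
  ultimately show ?thesis by blast
qed (use i in \<open>auto simp: cycle_residue0_def cycle_residue2_def mod_Suc\<close>)

lemma nat_ceiling_divide_4: "nat \<lceil>real n / 4\<rceil> = (n + 3) div 4"
proof -
  have "4 * ((n + 3) div 4) \<ge> n" "4 * ((n + 3) div 4) < n + 4" by linarith+
  hence "\<lceil>real n / 4\<rceil> = int ((n + 3) div 4)"
    by (intro ceiling_unique) (simp_all add: field_simps)
  thus ?thesis by simp
qed

theorem theorem5p1:
  fixes n m :: nat
  assumes "n \<ge> 3" and "m \<ge> 3"
  shows "paired_domination_number (torus_vertices n m) (torus_adj n m)
           \<le> 4 * nat (ceiling (real n / 4)) * nat (ceiling (real m / 4))"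
proof -
  let ?R1 = "cycle_residue0 n" and ?R2 = "cycle_residue2 n"
  have R: "?R1 \<subseteq> {0..<n}" "?R2 \<subseteq> {0..<n}" "?R1 \<inter> ?R2 = {}"
    unfolding cycle_residue0_def cycle_residue2_def by auto
  obtain P Q where PQ: "paired_dominating {0..<m} (cycle_adj m) P" "paired_dominating {0..<m} (cycle_adj m) Q"
    "P \<union> Q = {0..<m}" and card_PQ: "card P \<le> 2 * ((m + 3) div 4)" "card Q \<le> 2 * ((m + 3) div 4)"
    using cycle_two_pair_covers[OF assms(2)] by blast
  have "paired_dominating (torus_vertices n m) (torus_adj n m) (?R1 \<times> P \<union> ?R2 \<times> Q)"
    unfolding torus_vertices_def torus_adj_def using PQ R cycle_adj_residues[OF assms(1)]
    by (rule paired_dominating_cart_prod)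
  hence "paired_domination_number (torus_vertices n m) (torus_adj n m) \<le> card (?R1 \<times> P \<union> ?R2 \<times> Q)"
    by (rule paired_domination_number_le)
  also have "\<dots> \<le> card ?R1 * card P + card ?R2 * card Q"
    using card_Un_le[of "?R1 \<times> P" "?R2 \<times> Q"] by (simp add: card_cartesian_product)
  also have "\<dots> \<le> (n + 3) div 4 * (2 * ((m + 3) div 4)) + (n + 3) div 4 * (2 * ((m + 3) div 4))"
    using card_cycle_residue0 card_cycle_residue2 card_PQ by (intro add_mono mult_le_mono)
  also have "\<dots> = 4 * ((n + 3) div 4) * ((m + 3) div 4)" by simp
  finally show ?thesis unfolding nat_ceiling_divide_4 .
qed

end
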